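(* For every prime $p$ and every integer $t\ge 1$, \[ \overline{M}(p^t)=\sum_{j=1}^{p^t} f\!\left(\left\lfloor \frac{p^t}{j}\right\rfloor\right)-\sum_{j=1}^{p^{t-1}} f\!\left(\left\lfloor \frac{p^{t-1}}{j}\right\rfloor\right)+(p-1)\sum_{s=1}^{t}p^{s-1}\sum_{m=1}^{p^{t-s}} f\!\left(\left\lfloor \frac{p^t}{1+(m-1)p^s}\right\rfloor\right). \]
   Context: For a nonempty finite set $A$ of positive integers, $(A)$ denotes the greatest common divisor of the elements of $A$. For $m\in\mathbb{N}$, $f(m)$ is the number of nonempty subsets $A\subseteq\{1,2,\ldots,m\}$ with $(A)=1$. For $n\in\mathbb{N}$, \[ \overline{M}(n)=\sum_{\substack{\emptyset\ne A\subseteq\{1,\ldots,n\}\\ \gcd((A),n)=1}}\gcd((A)-1,n), \] with the convention $\gcd(0,n)=n$. *)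

theory Defs
  imports "HOL-Computational_Algebra.Primes"
begin

definition f :: "nat \<Rightarrow> nat" where
  "f m = card {A. A \<subseteq> {1..m} \<and> A \<noteq> {} \<and> Gcd A = 1}"

definition Mbar :: "nat \<Rightarrow> nat" where
  "Mbar n = (\<Sum>A\<in>{A. A \<subseteq> {1..n} \<and> A \<noteq> {} \<and> coprime (Gcd A) n}. gcd (Gcd A - 1) n)"

end

theory Submission
  imports Defs
begin

text \<open>Grouping the subsets A by d = Gcd A, the subsets with a given gcd d are exactly the
  d-fold dilates of the subsets of {1..n div d} with gcd 1, so
  Mbar n = \<Sum>d. f (n div d) * gcd (d - 1) n, the sum running over the units d of {1..n}.
  For n = p^t one has gcd (d - 1) (p^t) = 1 + (p - 1) * \<Sum>s. [p^s dvd d - 1] p^(s-1); the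
  term 1 gives the sum of f (p^t div d) over d coprime to p, i.e. over all d minus the
  multiples of p, and the condition p^s dvd d - 1 selects the progression d = 1 + (m - 1) p^s.\<close>

lemma subsets_Gcd_eq_image_dilate:
  fixes n d :: nat
  assumes "d \<ge> 1"
  shows "{A. A \<subseteq> {1..n} \<and> A \<noteq> {} \<and> Gcd A = d}
    = (\<lambda>B. (*) d ` B) ` {B. B \<subseteq> {1..n div d} \<and> B \<noteq> {} \<and> Gcd B = 1}"
proof (intro set_eqI iffI)
  fix A assume "A \<in> {A. A \<subseteq> {1..n} \<and> A \<noteq> {} \<and> Gcd A = d}"
  hence A: "A \<subseteq> {1..n}" "A \<noteq> {}" "Gcd A = d" by auto
  define B where "B = (\<lambda>a. a div d) ` A"
  have dvd: "d dvd a" if "a \<in> A" for a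
    using A(3) Gcd_dvd that by blast
  have A_eq: "A = (*) d ` B"
    unfolding B_def image_image using dvd by (auto simp: image_iff intro!: bexI)
  have "a div d \<in> {1..n div d}" if a: "a \<in> A" for a
  proof -
    obtain k where k: "a = d * k"
      using dvd[OF a] by (elim dvdE)
    hence "a \<le> n" "1 \<le> a"
      using A(1) a by auto
    thus ?thesis
      using k div_le_mono[of a n d] assms by (auto intro: Nat.gr0I)
  qed
  hence "B \<subseteq> {1..n div d}"
    unfolding B_def by blast
  moreover have "Gcd B = 1"
    using A(3) A_eq Gcd_mult[of d B] assms by simp
  ultimately show "A \<in> (\<lambda>B. (*) d ` B) ` {B. B \<subseteq> {1..n div d} \<and> B \<noteq> {} \<and> Gcd B = 1}"
    using A(2) A_eq B_def by blast
next
  fix A assume "A \<in> (\<lambda>B. (*) d ` B) ` {B. B \<subseteq> {1..n div d} \<and> B \<noteq> {} \<and> Gcd B = 1}"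
  then obtain B where B: "B \<subseteq> {1..n div d}" "B \<noteq> {}" "Gcd B = 1" and A_eq: "A = (*) d ` B"
    by auto
  have "d * b \<le> n" if "b \<le> n div d" for b
    using mult_le_mono2[OF that, of d] times_div_less_eq_dividend[of d n] by linarith
  hence "A \<subseteq> {1..n}"
    using A_eq B(1) assms by auto
  moreover have "Gcd A = d"
    using A_eq B(3) Gcd_mult[of d B] by simp
  ultimately show "A \<in> {A. A \<subseteq> {1..n} \<and> A \<noteq> {} \<and> Gcd A = d}"
    using B(2) A_eq by auto
qed

lemma card_subsets_Gcd_eq:
  fixes n d :: nat
  assumes "d \<ge> 1"
  shows "card {A. A \<subseteq> {1..n} \<and> A \<noteq> {} \<and> Gcd A = d} = f (n div d)"
proof -
  have "inj_on (\<lambda>B. (*) d ` B) {B. B \<subseteq> {1..n div d} \<and> B \<noteq> {} \<and> Gcd B = 1}"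
    using assms by (intro inj_onI) (auto simp: inj_image_eq_iff inj_def)
  thus ?thesis
    unfolding subsets_Gcd_eq_image_dilate[OF assms] f_def by (rule card_image)
qed

lemma Gcd_subset_atLeastAtMost:
  fixes A :: "nat set"
  assumes "A \<subseteq> {1..n}" and "A \<noteq> {}"
  shows "Gcd A \<in> {1..n}"
proof -
  obtain a where a: "a \<in> A" using assms(2) by auto
  hence "Gcd A dvd a" "1 \<le> a" "a \<le> n"
    using assms(1) by (auto intro: Gcd_dvd)
  thus ?thesis
    by (auto intro: Nat.gr0I dest: dvd_imp_le)
qed

lemma Mbar_eq_sum_gcd:
  "Mbar n = (\<Sum>d\<in>{d\<in>{1..n}. coprime d n}. f (n div d) * gcd (d - 1) n)"
proof -
  let ?S = "{A. A \<subseteq> {1..n} \<and> A \<noteq> {} \<and> coprime (Gcd A) n}"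
  let ?D = "{d\<in>{1..n}. coprime d n}"
  have fin: "finite ?S"
    by (rule finite_subset[of _ "Pow {1..n}"]) auto
  have img: "Gcd ` ?S \<subseteq> ?D"
    using Gcd_subset_atLeastAtMost by auto
  have "Mbar n = (\<Sum>d\<in>?D. \<Sum>A\<in>{A \<in> ?S. Gcd A = d}. gcd (Gcd A - 1) n)"
    unfolding Mbar_def by (rule sum.group[OF fin _ img, symmetric]) simp
  also have "\<dots> = (\<Sum>d\<in>?D. f (n div d) * gcd (d - 1) n)"
  proof (rule sum.cong[OF refl])
    fix d assume d: "d \<in> ?D"
    hence "{A \<in> ?S. Gcd A = d} = {A. A \<subseteq> {1..n} \<and> A \<noteq> {} \<and> Gcd A = d}"
      by auto
    thus "(\<Sum>A\<in>{A \<in> ?S. Gcd A = d}. gcd (Gcd A - 1) n) = f (n div d) * gcd (d - 1) n"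
      using d card_subsets_Gcd_eq[of d n] by simp
  qed
  finally show ?thesis .
qed

lemma gcd_prime_power_Suc:
  fixes p x t :: nat
  assumes "prime p" and "\<not> p ^ Suc t dvd x"
  shows "gcd x (p ^ Suc t) = gcd x (p ^ t)"
proof -
  obtain i where i: "i \<le> Suc t" "gcd x (p ^ Suc t) = p ^ i"
    using divides_primepow_nat[OF assms(1)] gcd_dvd2 by blast
  have "i \<noteq> Suc t"
    using i(2) gcd_dvd1[of x "p ^ Suc t"] assms(2) by auto
  hence "p ^ i dvd p ^ t"
    using i(1) by (intro le_imp_power_dvd) simp
  hence "gcd x (p ^ Suc t) dvd gcd x (p ^ t)"
    using i(2) by (metis gcd_dvd1 gcd_greatest)
  moreover have "gcd x (p ^ t) dvd gcd x (p ^ Suc t)"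
    by (simp add: gcd_mono)
  ultimately show ?thesis
    by (rule dvd_antisym)
qed

lemma gcd_prime_power_eq_sum:
  fixes p x t :: nat
  assumes "prime p"
  shows "gcd x (p ^ t) = 1 + (p - 1) * (\<Sum>s=1..t. if p ^ s dvd x then p ^ (s - 1) else 0)"
proof (induction t)
  case 0
  show ?case by simp
next
  case (Suc t)
  show ?case
  proof (cases "p ^ Suc t dvd x")
    case True
    hence "p ^ t dvd x"
      by (metis dvd_mult_left power_Suc2)
    hence "p ^ t = 1 + (p - 1) * (\<Sum>s=1..t. if p ^ s dvd x then p ^ (s - 1) else 0)"
      using Suc.IH by (simp add: gcd_nat.absorb2)
    moreover have "p ^ Suc t = p ^ t + (p - 1) * p ^ t"
      using prime_ge_1_nat[OF assms] by (simp add: diff_mult_distrib)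
    moreover have "gcd x (p ^ Suc t) = p ^ Suc t"
      using True by (simp add: gcd_nat.absorb2)
    ultimately show ?thesis
      using True by (simp add: distrib_left)
  next
    case False
    thus ?thesis
      using Suc.IH gcd_prime_power_Suc[OF assms] by simp
  qed
qed

lemma sum_mult_gcd_prime_power:
  fixes p t :: nat and h :: "nat \<Rightarrow> nat"
  assumes "prime p" and "finite D"
  shows "(\<Sum>d\<in>D. h d * gcd (d - 1) (p ^ t))
    = (\<Sum>d\<in>D. h d) + (p - 1) * (\<Sum>s=1..t. p ^ (s - 1) * (\<Sum>d\<in>{d\<in>D. p ^ s dvd d - 1}. h d))"
proof -
  have "(\<Sum>d\<in>D. h d * gcd (d - 1) (p ^ t))
      = (\<Sum>d\<in>D. h d + (p - 1) * (\<Sum>s=1..t. p ^ (s - 1) * (if p ^ s dvd d - 1 then h d else 0)))"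
    by (intro sum.cong refl)
       (auto simp: gcd_prime_power_eq_sum[OF assms(1)] distrib_left sum_distrib_left mult_ac intro!: sum.cong)
  also have "\<dots> = (\<Sum>d\<in>D. h d)
      + (p - 1) * (\<Sum>s=1..t. \<Sum>d\<in>D. p ^ (s - 1) * (if p ^ s dvd d - 1 then h d else 0))"
    by (simp add: sum.distrib sum_distrib_left sum.swap[of _ D])
  also have "\<dots> = (\<Sum>d\<in>D. h d) + (p - 1) * (\<Sum>s=1..t. p ^ (s - 1) * (\<Sum>d\<in>{d\<in>D. p ^ s dvd d - 1}. h d))"
    by (simp add: sum.inter_filter[OF assms(2)] sum_distrib_left)
  finally show ?thesis .
qed

lemma coprime_prime_power_iff_not_dvd:
  fixes p d t :: nat
  assumes "prime p" and "t \<ge> 1"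
  shows "coprime d (p ^ t) \<longleftrightarrow> \<not> p dvd d"
  using assms
  by (metis coprime_common_divisor_nat coprime_commute coprime_power_right_iff gcd_nat.eq_iff
      not_one_le_zero prime_elem_imp_coprime prime_elem_not_unit prime_imp_prime_elem)

lemma not_dvd_if_power_dvd_diff_one:
  fixes p s d :: nat
  assumes "p \<noteq> 1" and "s \<ge> 1" and "d \<ge> 1" and "p ^ s dvd d - 1"
  shows "\<not> p dvd d"
proof
  assume "p dvd d"
  moreover have "p dvd d - 1"
    using dvd_trans[OF le_imp_power_dvd[OF assms(2)] assms(4)] by simp
  ultimately have "p dvd d - (d - 1)"
    by (rule dvd_diff_nat)
  thus False
    using assms(1,3) by simp
qed

lemma sum_multiples_atLeastAtMost:
  fixes q N :: nat and g :: "nat \<Rightarrow> 'a::comm_monoid_add"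
  assumes "q > 0"
  shows "(\<Sum>d\<in>{d\<in>{1..q * N}. q dvd d}. g d) = (\<Sum>k=1..N. g (q * k))"
proof -
  have "{d\<in>{1..q * N}. q dvd d} = (*) q ` {1..N}"
  proof (intro set_eqI iffI)
    fix d assume "d \<in> {d\<in>{1..q * N}. q dvd d}"
    then obtain k where d: "1 \<le> d" "d \<le> q * N" "d = q * k"
      by (auto elim!: dvdE)
    hence "k \<in> {1..N}"
      using assms by (auto intro: Nat.gr0I)
    thus "d \<in> (*) q ` {1..N}"
      using d(3) by blast
  next
    fix d assume "d \<in> (*) q ` {1..N}"
    then obtain k where "k \<in> {1..N}" "d = q * k"
      by blast
    thus "d \<in> {d\<in>{1..q * N}. q dvd d}"
      using assms by (auto intro: Nat.gr0I)
  qed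
  moreover have "inj_on ((*) q) {1..N}"
    using assms by (simp add: inj_on_def)
  ultimately show ?thesis
    by (simp add: sum.reindex)
qed

lemma sum_atLeastAtMost_split_multiples:
  fixes q N :: nat and g :: "nat \<Rightarrow> 'a::comm_monoid_add"
  assumes "q > 0"
  shows "(\<Sum>d=1..q * N. g d) = (\<Sum>d\<in>{d\<in>{1..q * N}. \<not> q dvd d}. g d) + (\<Sum>k=1..N. g (q * k))"
proof -
  have "(\<Sum>d\<in>{d\<in>{1..q * N}. \<not> q dvd d}. g d) + (\<Sum>d\<in>{d\<in>{1..q * N}. q dvd d}. g d)
      = sum g ({d\<in>{1..q * N}. \<not> q dvd d} \<union> {d\<in>{1..q * N}. q dvd d})"
    by (rule sum.union_disjoint[symmetric]) auto
  also have "{d\<in>{1..q * N}. \<not> q dvd d} \<union> {d\<in>{1..q * N}. q dvd d} = {1..q * N}"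
    by blast
  finally have "(\<Sum>d=1..q * N. g d)
      = (\<Sum>d\<in>{d\<in>{1..q * N}. \<not> q dvd d}. g d) + (\<Sum>d\<in>{d\<in>{1..q * N}. q dvd d}. g d)" ..
  thus ?thesis
    using sum_multiples_atLeastAtMost[OF assms, where N = N and g = g] by simp
qed

lemma sum_congruent_one_atLeastAtMost:
  fixes q N :: nat and g :: "nat \<Rightarrow> 'a::comm_monoid_add"
  assumes "q > 0"
  shows "(\<Sum>d\<in>{d\<in>{1..q * N}. q dvd d - 1}. g d) = (\<Sum>m=1..N. g (1 + (m - 1) * q))"
proof -
  let ?a = "\<lambda>m. 1 + (m - 1) * q"
  have "{d\<in>{1..q * N}. q dvd d - 1} = ?a ` {1..N}"
  proof (intro set_eqI iffI)
    fix d assume "d \<in> {d\<in>{1..q * N}. q dvd d - 1}"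
    then obtain k where d: "1 \<le> d" "d \<le> q * N" "d - 1 = q * k"
      by (auto elim!: dvdE)
    hence "q * k < q * N"
      by linarith
    hence "k < N"
      by simp
    moreover have "d = ?a (Suc k)"
      using d by (simp add: mult.commute)
    ultimately show "d \<in> ?a ` {1..N}"
      by (intro image_eqI[of _ _ "Suc k"]) auto
  next
    fix d assume "d \<in> ?a ` {1..N}"
    then obtain m where m: "1 \<le> m" "m \<le> N" "d = ?a m"
      by auto
    have "(m - 1) * q < q * N"
      using m assms by (simp add: mult.commute)
    hence "?a m \<le> q * N"
      by linarith
    thus "d \<in> {d\<in>{1..q * N}. q dvd d - 1}"
      using m by simp
  qed
  moreover have "inj_on ?a {1..N}"
    using assms by (auto simp: inj_on_def)
  ultimately show ?thesis
    by (simp add: sum.reindex)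
qed

lemma Mbar_prime_power:
  fixes p t :: nat
  assumes "prime p" and "t \<ge> 1"
  shows "Mbar (p ^ t) = (\<Sum>d\<in>{d\<in>{1..p ^ t}. \<not> p dvd d}. f (p ^ t div d))
    + (p - 1) * (\<Sum>s=1..t. p ^ (s - 1) * (\<Sum>m=1..p ^ (t - s). f (p ^ t div (1 + (m - 1) * p ^ s))))"
proof -
  have p0: "p > 0" and p1: "p \<noteq> 1"
    using assms(1) prime_gt_0_nat not_prime_1 by blast+
  define F where "F d = f (p ^ t div d)" for d
  define D where "D = {d\<in>{1..p ^ t}. \<not> p dvd d}"
  have "Mbar (p ^ t) = (\<Sum>d\<in>D. F d * gcd (d - 1) (p ^ t))"
    using Mbar_eq_sum_gcd coprime_prime_power_iff_not_dvd[OF assms] by (simp add: D_def F_def)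
  also have "\<dots> = sum F D + (p - 1) * (\<Sum>s=1..t. p ^ (s - 1) * (\<Sum>d\<in>{d\<in>D. p ^ s dvd d - 1}. F d))"
    using assms(1) by (rule sum_mult_gcd_prime_power) (simp add: D_def)
  also have "(\<Sum>s=1..t. p ^ (s - 1) * (\<Sum>d\<in>{d\<in>D. p ^ s dvd d - 1}. F d))
      = (\<Sum>s=1..t. p ^ (s - 1) * (\<Sum>m=1..p ^ (t - s). F (1 + (m - 1) * p ^ s)))"
  proof (rule sum.cong[OF refl])
    fix s assume s: "s \<in> {1..t}"
    hence "p ^ t = p ^ s * p ^ (t - s)"
      by (simp flip: power_add)
    moreover have "\<not> p dvd d" if "d \<ge> 1" "p ^ s dvd d - 1" for d
      using not_dvd_if_power_dvd_diff_one[OF p1 _ that] s by simp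
    ultimately have "{d\<in>D. p ^ s dvd d - 1} = {d\<in>{1..p ^ s * p ^ (t - s)}. p ^ s dvd d - 1}"
      unfolding D_def by auto
    thus "p ^ (s - 1) * (\<Sum>d\<in>{d\<in>D. p ^ s dvd d - 1}. F d)
        = p ^ (s - 1) * (\<Sum>m=1..p ^ (t - s). F (1 + (m - 1) * p ^ s))"
      using sum_congruent_one_atLeastAtMost[where q = "p ^ s" and N = "p ^ (t - s)" and g = F] p0 by simp
  qed
  finally show ?thesis
    by (simp add: D_def F_def)
qed

theorem mainTheorem3:
  fixes p t :: nat
  assumes "prime p" and "t \<ge> 1"
  shows "int (Mbar (p ^ t)) =
    int (\<Sum>j=1..p ^ t. f (p ^ t div j))
    - int (\<Sum>j=1..p ^ (t - 1). f (p ^ (t - 1) div j))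
    + int ((p - 1) * (\<Sum>s=1..t. p ^ (s - 1) * (\<Sum>m=1..p ^ (t - s). f (p ^ t div (1 + (m - 1) * p ^ s)))))"
proof -
  have p0: "p > 0"
    using assms(1) prime_gt_0_nat by blast
  have pt: "p ^ t = p * p ^ (t - 1)"
    using assms(2) by (simp add: power_eq_if)
  have "(\<Sum>j=1..p ^ t. f (p ^ t div j))
      = (\<Sum>d\<in>{d\<in>{1..p ^ t}. \<not> p dvd d}. f (p ^ t div d)) + (\<Sum>k=1..p ^ (t - 1). f (p ^ t div (p * k)))"
    unfolding pt by (rule sum_atLeastAtMost_split_multiples[OF p0])
  also have "(\<Sum>k=1..p ^ (t - 1). f (p ^ t div (p * k))) = (\<Sum>j=1..p ^ (t - 1). f (p ^ (t - 1) div j))"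
    using p0 by (simp add: pt div_mult2_eq)
  finally show ?thesis
    unfolding Mbar_prime_power[OF assms] by simp
qed

end
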